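(* For all nonnegative integers $a,b,c$ (with $E$ taken to be $0$ whenever an argument is negative): $$2(a-b)E(a,b,c)+(a-b+c+1)E(a+1,b,c)+(a-b-c-1)E(a,b+1,c)=0,$$ $$2a\,E(a-1,b,c)+(a-b+c)E(a,b,c)+(c-a-b-1)E(a,b+1,c)=0,$$ $$(a-b)(a+b-c)E(a,b,c)+a(a-b-c-1)E(a-1,b,c)+b(a-b+c+1)E(a,b-1,c)=0,$$ $$(a-b+c+1)(a+b-c+1)E(a+1,b,c)+\big(3a^2+a-(2a+1)(b+c)-(b-c)^2\big)E(a,b,c)+2a(a-b-c-1)E(a-1,b,c)=0.$$
   Context: For nonnegative integers $n_1,\dots,n_S$, $E(n_1,\dots,n_S)$ denotes the number of block derangements: $S$ players hold $n_1,\dots,n_S$ distinct cards respectively; all $N=n_1+\dots+n_S$ cards are redealt so that player $j$ again receives exactly $n_j$ cards (only which cards each player gets matters); $E$ counts the deals in which no player receives any card he originally held. Equivalently, $E(n_1,\dots,n_S)$ is the coefficient of $x_1^{n_1}\cdots x_S^{n_S}$ in $\prod_{j=1}^S(x_1+\dots+x_S-x_j)^{n_j}$. By convention $E(0,\dots,0)=1$. *)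

theory Defs
  imports Main "HOL-Library.FuncSet"
begin

text \<open>Players are 0,...,S-1 where S = length ns; player j originally holds the
cards (j,k) for k < ns!j. A deal assigns each card a receiving player.\<close>

definition cards :: "nat list \<Rightarrow> (nat \<times> nat) set" where
  "cards ns = {(j,k). j < length ns \<and> k < ns ! j}"

definition block_deals :: "nat list \<Rightarrow> ((nat \<times> nat) \<Rightarrow> nat) set" where
  "block_deals ns = {f \<in> cards ns \<rightarrow>\<^sub>E {..<length ns}.
      (\<forall>c \<in> cards ns. f c \<noteq> fst c) \<and>
      (\<forall>j < length ns. card {c \<in> cards ns. f c = j} = ns ! j)}"

definition E :: "nat list \<Rightarrow> nat" where
  "E ns = card (block_deals ns)"

definition E3 :: "int \<Rightarrow> int \<Rightarrow> int \<Rightarrow> int" where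
  "E3 a b c = (if a < 0 \<or> b < 0 \<or> c < 0 then 0 else int (E [nat a, nat b, nat c]))"

end

theory Submission
  imports Defs Complex_Main
begin

text \<open>A block derangement of three hands of sizes a, b, c is determined by the set X of cards of
player 0 that go to player 1 and the sets Y, Z of cards of players 1 and 2 that go to player 0.
Counting these triples by x = |X| gives
  E(a,b,c) = a! b! c! \<Sum>x 1 / (x! (a-x)! (x+c-a)! (a+b-c-x)! (b-x)! (x+c-b)!).
Each recurrence is then proved by creative telescoping: its combination of summands equals
G(x+1) - G(x) for an explicit certificate G that vanishes at both ends of the summation range.\<close>

section \<open>Block derangements of three hands\<close>

lemma cards_three:
  "cards [a, b, c] = {(j, k). j = 0 \<and> k < a \<or> j = 1 \<and> k < b \<or> j = 2 \<and> k < c}"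
  unfolding cards_def by (auto simp: less_Suc_eq numeral_2_eq_2)

lemma card_Pair_image_Un:
  assumes "finite A" "finite B" "i \<noteq> j"
  shows "card (Pair i ` A \<union> Pair j ` B) = card A + card B"
  using assms by (subst card_Un_disjoint) (auto simp: card_image inj_on_def)

lemma card_filter_add_card_filter_not:
  "card {k. k < n \<and> P k} + card {k. k < n \<and> \<not> P k} = (n::nat)" (is "card ?A + card ?B = n")
proof -
  have "card ?A + card ?B = card (?A \<union> ?B)"
    by (rule card_Un_disjoint[symmetric]) auto
  also have "?A \<union> ?B = {..<n}" by auto
  finally show ?thesis by simp
qed

lemma block_deals_three_iff:
  "f \<in> block_deals [a, b, c] \<longleftrightarrow> f \<in> cards [a, b, c] \<rightarrow>\<^sub>E {..<3} \<and>
     (\<forall>k<a. f (0, k) \<in> {1, 2}) \<and> (\<forall>k<b. f (1, k) \<in> {0, 2}) \<and>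
     (\<forall>k<c. f (2, k) \<in> {0, 1}) \<and>
     card {k. k < b \<and> f (1, k) = 0} + card {k. k < c \<and> f (2, k) = 0} = a \<and>
     card {k. k < a \<and> f (0, k) = 1} + card {k. k < c \<and> f (2, k) = 1} = b \<and>
     card {k. k < a \<and> f (0, k) = 2} + card {k. k < b \<and> f (1, k) = 2} = c"
    (is "_ \<longleftrightarrow> ?range \<and> ?m0 \<and> ?m1 \<and> ?m2 \<and> _")
proof -
  have moves_iff: "(\<forall>x \<in> cards [a, b, c]. f x \<noteq> fst x) \<longleftrightarrow> ?m0 \<and> ?m1 \<and> ?m2" if ?range
  proof -
    have lt3: "f (j, k) < 3" if "(j, k) \<in> cards [a, b, c]" for j k
      using \<open>?range\<close> that by auto
    have "f (0, k) \<noteq> 0 \<longleftrightarrow> f (0, k) \<in> {1, 2}" if "k < a" for k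
      using lt3[of 0 k] that by (auto simp: cards_three)
    moreover have "f (1, k) \<noteq> 1 \<longleftrightarrow> f (1, k) \<in> {0, 2}" if "k < b" for k
      using lt3[of 1 k] that by (auto simp: cards_three)
    moreover have "f (2, k) \<noteq> 2 \<longleftrightarrow> f (2, k) \<in> {0, 1}" if "k < c" for k
      using lt3[of 2 k] that by (auto simp: cards_three)
    moreover have "(\<forall>x \<in> cards [a, b, c]. f x \<noteq> fst x) \<longleftrightarrow>
        (\<forall>k<a. f (0, k) \<noteq> 0) \<and> (\<forall>k<b. f (1, k) \<noteq> 1) \<and> (\<forall>k<c. f (2, k) \<noteq> 2)"
      unfolding cards_three by auto
    ultimately show ?thesis by simp
  qed
  have receivers:
    "{x \<in> cards [a, b, c]. f x = 0} =
      Pair 1 ` {k. k < b \<and> f (1, k) = 0} \<union> Pair 2 ` {k. k < c \<and> f (2, k) = 0}"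
    "{x \<in> cards [a, b, c]. f x = 1} =
      Pair 0 ` {k. k < a \<and> f (0, k) = 1} \<union> Pair 2 ` {k. k < c \<and> f (2, k) = 1}"
    "{x \<in> cards [a, b, c]. f x = 2} =
      Pair 0 ` {k. k < a \<and> f (0, k) = 2} \<union> Pair 1 ` {k. k < b \<and> f (1, k) = 2}"
    if ?m0 ?m1 ?m2
    using that unfolding cards_three by auto
  have deal_iff: "f \<in> block_deals [a, b, c] \<longleftrightarrow>
      ?range \<and> (\<forall>x \<in> cards [a, b, c]. f x \<noteq> fst x) \<and>
      card {x \<in> cards [a, b, c]. f x = 0} = a \<and> card {x \<in> cards [a, b, c]. f x = 1} = b \<and>
      card {x \<in> cards [a, b, c]. f x = 2} = c"
    unfolding block_deals_def
    by (auto simp: less_Suc_eq numeral_2_eq_2 numeral_3_eq_3 lessThan_Suc)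
  show ?thesis
  proof (cases "?range \<and> ?m0 \<and> ?m1 \<and> ?m2")
    case True
    then show ?thesis
      unfolding deal_iff using moves_iff receivers by (simp add: card_Pair_image_Un)
  next
    case False
    then show ?thesis unfolding deal_iff using moves_iff by blast
  qed
qed

text \<open>X: cards of player 0 dealt to player 1; Y, Z: cards of players 1 and 2 dealt to player 0.
Everything else goes to the remaining player.\<close>

definition deal_triples :: "nat \<Rightarrow> nat \<Rightarrow> nat \<Rightarrow> (nat set \<times> nat set \<times> nat set) set" where
  "deal_triples a b c = {(X, Y, Z). X \<subseteq> {..<a} \<and> Y \<subseteq> {..<b} \<and> Z \<subseteq> {..<c} \<and>
     card Y + card Z = a \<and> card X + (c - card Z) = b}"

definition triple_of_deal ::
    "nat \<Rightarrow> nat \<Rightarrow> nat \<Rightarrow> (nat \<times> nat \<Rightarrow> nat) \<Rightarrow> nat set \<times> nat set \<times> nat set" where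
  "triple_of_deal a b c f =
     ({k. k < a \<and> f (0, k) = 1}, {k. k < b \<and> f (1, k) = 0}, {k. k < c \<and> f (2, k) = 0})"

definition deal_of_triple ::
    "nat \<Rightarrow> nat \<Rightarrow> nat \<Rightarrow> nat set \<times> nat set \<times> nat set \<Rightarrow> nat \<times> nat \<Rightarrow> nat" where
  "deal_of_triple a b c = (\<lambda>(X, Y, Z) (j, k).
     if (j, k) \<notin> cards [a, b, c] then undefined
     else if j = 0 then (if k \<in> X then 1 else 2)
     else if j = 1 then (if k \<in> Y then 0 else 2)
     else if k \<in> Z then 0 else 1)"

lemma card_less_not_in:
  assumes "X \<subseteq> {..<n}"
  shows "card {k. k < n \<and> k \<notin> X} = n - card X"
proof -
  have "{k. k < n \<and> k \<in> X} = X" using assms by auto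
  then show ?thesis using card_filter_add_card_filter_not[of n "\<lambda>k. k \<in> X"] by simp
qed

lemma bij_betw_triple_of_deal:
  "bij_betw (triple_of_deal a b c) (block_deals [a, b, c]) (deal_triples a b c)"
proof (rule bij_betw_byWitness[where f' = "deal_of_triple a b c"])
  show "\<forall>f \<in> block_deals [a, b, c]. deal_of_triple a b c (triple_of_deal a b c f) = f"
  proof
    fix f assume "f \<in> block_deals [a, b, c]"
    then have "f \<in> cards [a, b, c] \<rightarrow>\<^sub>E {..<3}" "\<forall>k<a. f (0, k) \<in> {1, 2}"
      "\<forall>k<b. f (1, k) \<in> {0, 2}" "\<forall>k<c. f (2, k) \<in> {0, 1}"
      by (simp_all add: block_deals_three_iff)
    then show "deal_of_triple a b c (triple_of_deal a b c f) = f"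
      unfolding deal_of_triple_def triple_of_deal_def
      by (fastforce simp: cards_three PiE_def extensional_def)
  qed
  show "\<forall>t \<in> deal_triples a b c. triple_of_deal a b c (deal_of_triple a b c t) = t"
    unfolding deal_triples_def triple_of_deal_def deal_of_triple_def cards_three by auto
  show "triple_of_deal a b c ` block_deals [a, b, c] \<subseteq> deal_triples a b c"
  proof
    fix t assume "t \<in> triple_of_deal a b c ` block_deals [a, b, c]"
    then obtain f where f: "f \<in> block_deals [a, b, c]" and t: "t = triple_of_deal a b c f"
      by blast
    have "{k. k < c \<and> f (2, k) = 1} = {k. k < c \<and> \<not> f (2, k) = 0}"
      using f by (auto simp: block_deals_three_iff)
    then have "card {k. k < c \<and> f (2, k) = 1} = c - card {k. k < c \<and> f (2, k) = 0}"
      using card_filter_add_card_filter_not[of c "\<lambda>k. f (2, k) = 0"] by simp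
    then show "t \<in> deal_triples a b c"
      using f unfolding t deal_triples_def triple_of_deal_def block_deals_three_iff by auto
  qed
  show "deal_of_triple a b c ` deal_triples a b c \<subseteq> block_deals [a, b, c]"
  proof
    fix f assume "f \<in> deal_of_triple a b c ` deal_triples a b c"
    then obtain X Y Z
      where XYZ: "(X, Y, Z) \<in> deal_triples a b c" and f: "f = deal_of_triple a b c (X, Y, Z)"
      by auto
    then have "X \<subseteq> {..<a}" "Y \<subseteq> {..<b}" "Z \<subseteq> {..<c}" by (auto simp: deal_triples_def)
    then have sets:
      "{k. k < a \<and> f (0, k) = 1} = X" "{k. k < a \<and> f (0, k) = 2} = {k. k < a \<and> k \<notin> X}"
      "{k. k < b \<and> f (1, k) = 0} = Y" "{k. k < b \<and> f (1, k) = 2} = {k. k < b \<and> k \<notin> Y}"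
      "{k. k < c \<and> f (2, k) = 0} = Z" "{k. k < c \<and> f (2, k) = 1} = {k. k < c \<and> k \<notin> Z}"
      unfolding f deal_of_triple_def cards_three by auto
    have "f \<in> cards [a, b, c] \<rightarrow>\<^sub>E {..<3}"
      unfolding f deal_of_triple_def by (auto simp: PiE_def extensional_def cards_three)
    moreover have
      "\<forall>k<a. f (0, k) \<in> {1, 2}" "\<forall>k<b. f (1, k) \<in> {0, 2}" "\<forall>k<c. f (2, k) \<in> {0, 1}"
      unfolding f deal_of_triple_def cards_three by auto
    moreover have "card X \<le> a" "card Y \<le> b" "card Z \<le> c"
      using \<open>X \<subseteq> {..<a}\<close> \<open>Y \<subseteq> {..<b}\<close> \<open>Z \<subseteq> {..<c}\<close>
      by (auto dest: card_mono[rotated])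
    ultimately show "f \<in> block_deals [a, b, c]"
      using XYZ \<open>X \<subseteq> {..<a}\<close> \<open>Y \<subseteq> {..<b}\<close> \<open>Z \<subseteq> {..<c}\<close>
      unfolding block_deals_three_iff sets deal_triples_def by (simp add: card_less_not_in) arith
  qed
qed

definition compatible_pairs :: "nat \<Rightarrow> nat \<Rightarrow> nat \<Rightarrow> nat \<Rightarrow> (nat set \<times> nat set) set" where
  "compatible_pairs a b c x =
     {(Y, Z). Y \<subseteq> {..<b} \<and> Z \<subseteq> {..<c} \<and> card Y + card Z = a \<and> x + (c - card Z) = b}"

lemma card_le_of_subset_lessThan: "Z \<subseteq> {..<n} \<Longrightarrow> card Z \<le> n"
  using card_mono[of "{..<n}" Z] by simp

lemma deal_triples_eq_UN:
  "deal_triples a b c =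
     (\<Union>x \<in> {0..a}. {X. X \<subseteq> {..<a} \<and> card X = x} \<times> compatible_pairs a b c x)"
  unfolding deal_triples_def compatible_pairs_def by (auto dest: card_le_of_subset_lessThan)

lemma card_compatible_pairs:
  "card (compatible_pairs a b c x) =
     (if b \<le> x + c \<and> x + c - b \<le> a
      then (c choose (x + c - b)) * (b choose (a - (x + c - b))) else 0)"
proof (cases "b \<le> x + c \<and> x + c - b \<le> a")
  case True
  then have "compatible_pairs a b c x =
      {Y. Y \<subseteq> {..<b} \<and> card Y = a - (x + c - b)} \<times> {Z. Z \<subseteq> {..<c} \<and> card Z = x + c - b}"
    unfolding compatible_pairs_def by (auto dest: card_le_of_subset_lessThan)
  then show ?thesis using True by (simp add: card_cartesian_product n_subsets)
next
  case False
  then have "compatible_pairs a b c x = {}"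
    unfolding compatible_pairs_def by (auto dest: card_le_of_subset_lessThan)
  then show ?thesis unfolding if_not_P[OF False] by simp
qed

lemma card_deal_triples:
  "card (deal_triples a b c) = (\<Sum>x \<in> {0..a}. (a choose x) * card (compatible_pairs a b c x))"
proof -
  have "finite (compatible_pairs a b c x)" for x
    by (rule finite_subset[of _ "Pow {..<b} \<times> Pow {..<c}"]) (auto simp: compatible_pairs_def)
  moreover have "finite {X. X \<subseteq> {..<a} \<and> card X = x}" for x
    by (rule finite_subset[of _ "Pow {..<a}"]) auto
  ultimately show ?thesis
    unfolding deal_triples_eq_UN
    by (subst card_UN_disjoint) (auto simp: card_cartesian_product n_subsets)
qed

section \<open>The hypergeometric sum\<close>

text \<open>1/n!, extended by zero to negative n: then inv_fact (n - 1) = n * inv_fact n holds for every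
integer n, and summands outside the natural summation range vanish.\<close>

definition inv_fact :: "int \<Rightarrow> real" where
  "inv_fact n = (if n < 0 then 0 else 1 / fact (nat n))"

lemma inv_fact_pred: "inv_fact (n - 1) = of_int n * inv_fact n"
proof (cases "n \<ge> 1")
  case True
  then have "nat n = Suc (nat (n - 1))" by simp
  then show ?thesis using True by (simp add: inv_fact_def)
next
  case False
  then show ?thesis by (simp add: inv_fact_def)
qed

lemma inv_fact_shift: "m = n - 1 \<Longrightarrow> inv_fact m = of_int n * inv_fact n"
  by (simp add: inv_fact_pred)

lemma inv_fact_shift2:
  "m = n - 2 \<Longrightarrow> k = n - 1 \<Longrightarrow> inv_fact m = of_int k * of_int n * inv_fact n"
  using inv_fact_pred[of "n - 1"] inv_fact_pred[of n] by simp

lemma real_choose_eq_inv_fact: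
  "real (n choose k) = fact n * inv_fact (int k) * inv_fact (int n - int k)"
proof (cases "k \<le> n")
  case True
  then have "nat (int n - int k) = n - k" by simp
  then show ?thesis using True by (simp add: binomial_fact inv_fact_def)
next
  case False
  then show ?thesis by (simp add: inv_fact_def)
qed

definition hterm :: "int \<Rightarrow> int \<Rightarrow> int \<Rightarrow> int \<Rightarrow> real" where
  "hterm a b c x = inv_fact x * inv_fact (a - x) * inv_fact (x + c - a) * inv_fact (a + b - c - x) *
     inv_fact (b - x) * inv_fact (x + c - b)"

definition hsum :: "int \<Rightarrow> int \<Rightarrow> int \<Rightarrow> real" where
  "hsum a b c = (\<Sum>x \<in> {0..a}. hterm a b c x)"

lemma real_choose_mult_card_compatible_pairs:
  "real ((a choose x) * card (compatible_pairs a b c x)) = fact a * fact b * fact c * hterm a b c x"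
proof (cases "b \<le> x + c \<and> x + c - b \<le> a")
  case True
  then have "int (x + c - b) = int x + int c - int b"
    "int (a + b - (x + c)) = int a + int b - int c - int x"
    "int b - (int a + int b - int c - int x) = int x + int c - int a"
    "int c - (int x + int c - int b) = int b - int x"
    by auto
  then show ?thesis using True
    by (simp add: card_compatible_pairs hterm_def real_choose_eq_inv_fact del: of_nat_diff)
      (simp add: add.commute)
next
  case False
  then have "hterm a b c x = 0" by (auto simp: hterm_def inv_fact_def)
  then show ?thesis unfolding card_compatible_pairs if_not_P[OF False] by simp
qed

lemma E_three_eq_hsum: "real (E [a, b, c]) = fact a * fact b * fact c * hsum a b c"
proof -
  have "E [a, b, c] = card (deal_triples a b c)"
    unfolding E_def by (rule bij_betw_same_card[OF bij_betw_triple_of_deal])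
  then have "real (E [a, b, c]) = (\<Sum>x \<in> {0..a}. fact a * fact b * fact c * hterm a b c x)"
    by (simp only: card_deal_triples of_nat_sum real_choose_mult_card_compatible_pairs)
  also have "\<dots> = fact a * fact b * fact c * (\<Sum>x \<in> int ` {0..a}. hterm a b c x)"
    by (simp add: sum_distrib_left sum.reindex)
  finally show ?thesis by (simp add: hsum_def image_int_atLeastAtMost)
qed

lemma hsum_eq_sum_upto: "a \<le> N \<Longrightarrow> (\<Sum>x \<in> {0..N}. hterm a b c x) = hsum a b c"
  unfolding hsum_def by (rule sum.mono_neutral_right) (auto simp: hterm_def inv_fact_def)

lemma hsum_eq_0_if_negative: "a < 0 \<or> b < 0 \<or> c < 0 \<Longrightarrow> hsum a b c = 0"
  unfolding hsum_def hterm_def inv_fact_def by (intro sum.neutral) auto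

section \<open>Recurrences by creative telescoping\<close>

lemma sum_int_telescope:
  fixes f :: "int \<Rightarrow> 'a::ab_group_add"
  assumes "0 \<le> N"
  shows "(\<Sum>x \<in> {0..N}. f (x + 1) - f x) = f (N + 1) - f 0"
  using assms
proof (induction N rule: int_ge_induct)
  case (step N)
  have "{0..N + 1} = insert (N + 1) {0..N}" using step.hyps by auto
  then show ?case using step.IH by simp
qed simp

lemma sum_eq_0_by_certificate:
  fixes L G :: "int \<Rightarrow> 'a::ab_group_add"
  assumes "0 \<le> N" "\<And>x. L x = G (x + 1) - G x" "G 0 = 0" "G (N + 1) = 0"
  shows "(\<Sum>x \<in> {0..N}. L x) = 0"
  using sum_int_telescope[OF assms(1), of G] assms(2-4) by simp

definition cert1 :: "int \<Rightarrow> int \<Rightarrow> int \<Rightarrow> int \<Rightarrow> real" where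
  "cert1 a b c x = of_int (a - b) *
     inv_fact (x - 1) * inv_fact (a - x + 1) * inv_fact (x + c - a - 1) *
     inv_fact (a + b - c - x + 1) * inv_fact (b - x + 1) * inv_fact (x + c - b - 1)"

lemma cert1_diff:
  "of_int (2 * (a - b)) * hterm a b c x + of_int ((a - b + c + 1) * (a + 1)) * hterm (a + 1) b c x
     + of_int ((a - b - c - 1) * (b + 1)) * hterm a (b + 1) c x
   = cert1 a b c (x + 1) - cert1 a b c x"
proof -
  txt \<open>Each factor is rewritten as a polynomial multiple of one top factor per factorial family,
    which turns the claim into a polynomial identity.\<close>
  have shifts:
    "inv_fact (x - 1) = of_int x * inv_fact x"
    "inv_fact (x + 1 - 1) = inv_fact x"
    "inv_fact (a - x) = of_int (a - x + 1) * inv_fact (a - x + 1)"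
    "inv_fact (a + 1 - x) = inv_fact (a - x + 1)"
    "inv_fact (a - (x + 1) + 1) = of_int (a - x + 1) * inv_fact (a - x + 1)"
    "inv_fact (x + c - a - 1) = of_int (x + c - a) * inv_fact (x + c - a)"
    "inv_fact (x + c - (a + 1)) = of_int (x + c - a) * inv_fact (x + c - a)"
    "inv_fact (x + 1 + c - a - 1) = inv_fact (x + c - a)"
    "inv_fact (a + b - c - x) = of_int (a + b - c - x + 1) * inv_fact (a + b - c - x + 1)"
    "inv_fact (a + 1 + b - c - x) = inv_fact (a + b - c - x + 1)"
    "inv_fact (a + (b + 1) - c - x) = inv_fact (a + b - c - x + 1)"
    "inv_fact (a + b - c - (x + 1) + 1) = of_int (a + b - c - x + 1) * inv_fact (a + b - c - x + 1)"
    "inv_fact (b - x) = of_int (b - x + 1) * inv_fact (b - x + 1)"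
    "inv_fact (b + 1 - x) = inv_fact (b - x + 1)"
    "inv_fact (b - (x + 1) + 1) = of_int (b - x + 1) * inv_fact (b - x + 1)"
    "inv_fact (x + c - b - 1) = of_int (x + c - b) * inv_fact (x + c - b)"
    "inv_fact (x + c - (b + 1)) = of_int (x + c - b) * inv_fact (x + c - b)"
    "inv_fact (x + 1 + c - b - 1) = inv_fact (x + c - b)"
    by (rule inv_fact_shift inv_fact_shift2 arg_cong[where f = inv_fact]; simp)+
  show ?thesis
    unfolding hterm_def cert1_def shifts
    by (simp only: of_int_add of_int_diff of_int_mult of_int_power of_int_1 of_int_numeral) algebra
qed

definition cert2 :: "int \<Rightarrow> int \<Rightarrow> int \<Rightarrow> int \<Rightarrow> real" where
  "cert2 a b c x = of_int (a + 2 * b - c - x + 2) *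
     inv_fact (x - 1) * inv_fact (a - x) * inv_fact (x + c - a) *
     inv_fact (a + b - c - x + 1) * inv_fact (b - x + 1) * inv_fact (x + c - b - 1)"

lemma cert2_diff:
  "2 * hterm (a - 1) b c x + of_int (a - b + c) * hterm a b c x
     + of_int ((c - a - b - 1) * (b + 1)) * hterm a (b + 1) c x
   = cert2 a b c (x + 1) - cert2 a b c x"
proof -
  have shifts:
    "inv_fact (x - 1) = of_int x * inv_fact x"
    "inv_fact (x + 1 - 1) = inv_fact x"
    "inv_fact (a - 1 - x) = of_int (a - x) * inv_fact (a - x)"
    "inv_fact (a - (x + 1)) = of_int (a - x) * inv_fact (a - x)"
    "inv_fact (x + c - a) = of_int (x + c - a + 1) * inv_fact (x + c - a + 1)"
    "inv_fact (x + c - (a - 1)) = inv_fact (x + c - a + 1)"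
    "inv_fact (x + 1 + c - a) = inv_fact (x + c - a + 1)"
    "inv_fact (a - 1 + b - c - x) =
      of_int (a + b - c - x) * of_int (a + b - c - x + 1) * inv_fact (a + b - c - x + 1)"
    "inv_fact (a + b - c - x) = of_int (a + b - c - x + 1) * inv_fact (a + b - c - x + 1)"
    "inv_fact (a + (b + 1) - c - x) = inv_fact (a + b - c - x + 1)"
    "inv_fact (a + b - c - (x + 1) + 1) = of_int (a + b - c - x + 1) * inv_fact (a + b - c - x + 1)"
    "inv_fact (b - x) = of_int (b - x + 1) * inv_fact (b - x + 1)"
    "inv_fact (b + 1 - x) = inv_fact (b - x + 1)"
    "inv_fact (b - (x + 1) + 1) = of_int (b - x + 1) * inv_fact (b - x + 1)"
    "inv_fact (x + c - b - 1) = of_int (x + c - b) * inv_fact (x + c - b)"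
    "inv_fact (x + c - (b + 1)) = of_int (x + c - b) * inv_fact (x + c - b)"
    "inv_fact (x + 1 + c - b - 1) = inv_fact (x + c - b)"
    by (rule inv_fact_shift inv_fact_shift2 arg_cong[where f = inv_fact]; simp)+
  show ?thesis
    unfolding hterm_def cert2_def shifts
    by (simp only: of_int_add of_int_diff of_int_mult of_int_power of_int_1 of_int_numeral) algebra
qed

definition cert3 :: "int \<Rightarrow> int \<Rightarrow> int \<Rightarrow> int \<Rightarrow> real" where
  "cert3 a b c x = of_int (b - a) * inv_fact (x - 1) * inv_fact (a - x) * inv_fact (x + c - a) *
     inv_fact (a + b - c - x) * inv_fact (b - x) * inv_fact (x + c - b)"

lemma cert3_diff:
  "of_int ((a - b) * (a + b - c)) * hterm a b c x + of_int (a - b - c - 1) * hterm (a - 1) b c x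
     + of_int (a - b + c + 1) * hterm a (b - 1) c x
   = cert3 a b c (x + 1) - cert3 a b c x"
proof -
  have shifts:
    "inv_fact (x - 1) = of_int x * inv_fact x"
    "inv_fact (x + 1 - 1) = inv_fact x"
    "inv_fact (a - 1 - x) = of_int (a - x) * inv_fact (a - x)"
    "inv_fact (a - (x + 1)) = of_int (a - x) * inv_fact (a - x)"
    "inv_fact (x + c - a) = of_int (x + c - a + 1) * inv_fact (x + c - a + 1)"
    "inv_fact (x + c - (a - 1)) = inv_fact (x + c - a + 1)"
    "inv_fact (x + 1 + c - a) = inv_fact (x + c - a + 1)"
    "inv_fact (a - 1 + b - c - x) = of_int (a + b - c - x) * inv_fact (a + b - c - x)"
    "inv_fact (a + (b - 1) - c - x) = of_int (a + b - c - x) * inv_fact (a + b - c - x)"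
    "inv_fact (a + b - c - (x + 1)) = of_int (a + b - c - x) * inv_fact (a + b - c - x)"
    "inv_fact (b - 1 - x) = of_int (b - x) * inv_fact (b - x)"
    "inv_fact (b - (x + 1)) = of_int (b - x) * inv_fact (b - x)"
    "inv_fact (x + c - b) = of_int (x + c - b + 1) * inv_fact (x + c - b + 1)"
    "inv_fact (x + c - (b - 1)) = inv_fact (x + c - b + 1)"
    "inv_fact (x + 1 + c - b) = inv_fact (x + c - b + 1)"
    by (rule inv_fact_shift inv_fact_shift2 arg_cong[where f = inv_fact]; simp)+
  show ?thesis
    unfolding hterm_def cert3_def shifts
    by (simp only: of_int_add of_int_diff of_int_mult of_int_power of_int_1 of_int_numeral) algebra
qed

definition cert4 :: "int \<Rightarrow> int \<Rightarrow> int \<Rightarrow> int \<Rightarrow> real" where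
  "cert4 a b c x =
     of_int (a^2 - a * b - 2 * a * c + c^2 - b * c - a * x + b * x + c * x - a - 2 * b - c + x - 2) *
     inv_fact (x - 1) * inv_fact (a - x + 1) * inv_fact (x + c - a) *
     inv_fact (a + b - c - x + 1) * inv_fact (b - x) * inv_fact (x + c - b - 1)"

lemma cert4_diff:
  "of_int ((a - b + c + 1) * (a + b - c + 1) * (a + 1)) * hterm (a + 1) b c x
     + of_int (3 * a^2 + a - (2 * a + 1) * (b + c) - (b - c)^2) * hterm a b c x
     + of_int (2 * (a - b - c - 1)) * hterm (a - 1) b c x
   = cert4 a b c (x + 1) - cert4 a b c x"
proof -
  have shifts:
    "inv_fact (x - 1) = of_int x * inv_fact x"
    "inv_fact (x + 1 - 1) = inv_fact x"
    "inv_fact (a + 1 - x) = inv_fact (a - x + 1)"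
    "inv_fact (a - x) = of_int (a - x + 1) * inv_fact (a - x + 1)"
    "inv_fact (a - 1 - x) = of_int (a - x) * of_int (a - x + 1) * inv_fact (a - x + 1)"
    "inv_fact (a - (x + 1) + 1) = of_int (a - x + 1) * inv_fact (a - x + 1)"
    "inv_fact (x + c - (a + 1)) =
      of_int (x + c - a) * of_int (x + c - a + 1) * inv_fact (x + c - a + 1)"
    "inv_fact (x + c - a) = of_int (x + c - a + 1) * inv_fact (x + c - a + 1)"
    "inv_fact (x + c - (a - 1)) = inv_fact (x + c - a + 1)"
    "inv_fact (x + 1 + c - a) = inv_fact (x + c - a + 1)"
    "inv_fact (a + 1 + b - c - x) = inv_fact (a + b - c - x + 1)"
    "inv_fact (a + b - c - x) = of_int (a + b - c - x + 1) * inv_fact (a + b - c - x + 1)"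
    "inv_fact (a - 1 + b - c - x) =
      of_int (a + b - c - x) * of_int (a + b - c - x + 1) * inv_fact (a + b - c - x + 1)"
    "inv_fact (a + b - c - (x + 1) + 1) = of_int (a + b - c - x + 1) * inv_fact (a + b - c - x + 1)"
    "inv_fact (b - (x + 1)) = of_int (b - x) * inv_fact (b - x)"
    "inv_fact (x + c - b - 1) = of_int (x + c - b) * inv_fact (x + c - b)"
    "inv_fact (x + 1 + c - b - 1) = inv_fact (x + c - b)"
    by (rule inv_fact_shift inv_fact_shift2 arg_cong[where f = inv_fact]; simp)+
  show ?thesis
    unfolding hterm_def cert4_def shifts
    by (simp only: of_int_add of_int_diff of_int_mult of_int_power of_int_1 of_int_numeral) algebra
qed

lemma hsum_recurrence1:
  assumes "0 \<le> a"
  shows "of_int (2 * (a - b)) * hsum a b c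
    + of_int ((a - b + c + 1) * (a + 1)) * hsum (a + 1) b c
    + of_int ((a - b - c - 1) * (b + 1)) * hsum a (b + 1) c = 0" (is "?lhs = 0")
proof -
  have "?lhs = (\<Sum>x \<in> {0..a + 1}. of_int (2 * (a - b)) * hterm a b c x
      + of_int ((a - b + c + 1) * (a + 1)) * hterm (a + 1) b c x
      + of_int ((a - b - c - 1) * (b + 1)) * hterm a (b + 1) c x)"
    by (simp add: sum.distrib hsum_eq_sum_upto flip: sum_distrib_left
        del: of_int_mult of_int_add of_int_diff)
  also have "\<dots> = 0"
    using assms by (intro sum_eq_0_by_certificate[where G = "cert1 a b c"] cert1_diff)
      (simp_all add: cert1_def inv_fact_def)
  finally show ?thesis .
qed

lemma hsum_recurrence2:
  assumes "0 \<le> a"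
  shows "2 * hsum (a - 1) b c
    + of_int (a - b + c) * hsum a b c
    + of_int ((c - a - b - 1) * (b + 1)) * hsum a (b + 1) c = 0" (is "?lhs = 0")
proof -
  have "?lhs = (\<Sum>x \<in> {0..a}. 2 * hterm (a - 1) b c x
      + of_int (a - b + c) * hterm a b c x
      + of_int ((c - a - b - 1) * (b + 1)) * hterm a (b + 1) c x)"
    by (simp add: sum.distrib hsum_eq_sum_upto flip: sum_distrib_left
        del: of_int_mult of_int_add of_int_diff)
  also have "\<dots> = 0"
    using assms by (intro sum_eq_0_by_certificate[where G = "cert2 a b c"] cert2_diff)
      (simp_all add: cert2_def inv_fact_def)
  finally show ?thesis .
qed

lemma hsum_recurrence3:
  assumes "0 \<le> a"
  shows "of_int ((a - b) * (a + b - c)) * hsum a b c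
    + of_int (a - b - c - 1) * hsum (a - 1) b c
    + of_int (a - b + c + 1) * hsum a (b - 1) c = 0" (is "?lhs = 0")
proof -
  have "?lhs = (\<Sum>x \<in> {0..a}. of_int ((a - b) * (a + b - c)) * hterm a b c x
      + of_int (a - b - c - 1) * hterm (a - 1) b c x
      + of_int (a - b + c + 1) * hterm a (b - 1) c x)"
    by (simp add: sum.distrib hsum_eq_sum_upto flip: sum_distrib_left
        del: of_int_mult of_int_add of_int_diff)
  also have "\<dots> = 0"
    using assms by (intro sum_eq_0_by_certificate[where G = "cert3 a b c"] cert3_diff)
      (simp_all add: cert3_def inv_fact_def)
  finally show ?thesis .
qed

lemma hsum_recurrence4:
  assumes "0 \<le> a"
  shows "of_int ((a - b + c + 1) * (a + b - c + 1) * (a + 1)) * hsum (a + 1) b c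
    + of_int (3 * a^2 + a - (2 * a + 1) * (b + c) - (b - c)^2) * hsum a b c
    + of_int (2 * (a - b - c - 1)) * hsum (a - 1) b c = 0" (is "?lhs = 0")
proof -
  have "?lhs = (\<Sum>x \<in> {0..a + 1}.
      of_int ((a - b + c + 1) * (a + b - c + 1) * (a + 1)) * hterm (a + 1) b c x
      + of_int (3 * a^2 + a - (2 * a + 1) * (b + c) - (b - c)^2) * hterm a b c x
      + of_int (2 * (a - b - c - 1)) * hterm (a - 1) b c x)"
    by (simp add: sum.distrib hsum_eq_sum_upto flip: sum_distrib_left
        del: of_int_mult of_int_add of_int_diff)
  also have "\<dots> = 0"
    using assms by (intro sum_eq_0_by_certificate[where G = "cert4 a b c"] cert4_diff)
      (simp_all add: cert4_def inv_fact_def)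
  finally show ?thesis .
qed

lemma fact_nat_add_one:
  "0 \<le> n \<Longrightarrow> fact (nat (n + 1)) = of_int (n + 1) * (fact (nat n) :: real)"
  by (simp add: nat_add_distrib)

lemma of_int_E3_eq_hsum:
  "real_of_int (E3 a b c) = fact (nat a) * fact (nat b) * fact (nat c) * hsum a b c"
proof (cases "a < 0 \<or> b < 0 \<or> c < 0")
  case True
  then show ?thesis by (simp add: E3_def hsum_eq_0_if_negative)
next
  case False
  then show ?thesis using E_three_eq_hsum[of "nat a" "nat b" "nat c"] by (simp add: E3_def)
qed

lemma of_int_E3_neighbours:
  assumes "0 \<le> a" "0 \<le> b" "0 \<le> c"
  defines "K \<equiv> fact (nat a) * fact (nat b) * fact (nat c) :: real"
  shows "real_of_int (E3 (a + 1) b c) = of_int (a + 1) * K * hsum (a + 1) b c"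
    and "real_of_int (E3 a (b + 1) c) = of_int (b + 1) * K * hsum a (b + 1) c"
    and "real_of_int a * real_of_int (E3 (a - 1) b c) = K * hsum (a - 1) b c"
    and "real_of_int b * real_of_int (E3 a (b - 1) c) = K * hsum a (b - 1) c"
proof -
  show "real_of_int (E3 (a + 1) b c) = of_int (a + 1) * K * hsum (a + 1) b c"
    using assms by (simp add: of_int_E3_eq_hsum fact_nat_add_one)
  show "real_of_int (E3 a (b + 1) c) = of_int (b + 1) * K * hsum a (b + 1) c"
    using assms by (simp add: of_int_E3_eq_hsum fact_nat_add_one)
  show "real_of_int a * real_of_int (E3 (a - 1) b c) = K * hsum (a - 1) b c"
  proof (cases "a = 0")
    case False
    then have "fact (nat a) = of_int a * (fact (nat (a - 1)) :: real)"
      using fact_nat_add_one[of "a - 1"] assms by simp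
    then show ?thesis unfolding K_def by (simp add: of_int_E3_eq_hsum)
  qed (simp add: E3_def hsum_eq_0_if_negative)
  show "real_of_int b * real_of_int (E3 a (b - 1) c) = K * hsum a (b - 1) c"
  proof (cases "b = 0")
    case False
    then have "fact (nat b) = of_int b * (fact (nat (b - 1)) :: real)"
      using fact_nat_add_one[of "b - 1"] assms by simp
    then show ?thesis unfolding K_def by (simp add: of_int_E3_eq_hsum)
  qed (simp add: E3_def hsum_eq_0_if_negative)
qed

lemma E3_recurrences:
  assumes "0 \<le> a" "0 \<le> b" "0 \<le> c"
  shows "2*(a-b)*E3 a b c + (a-b+c+1)*E3 (a+1) b c + (a-b-c-1)*E3 a (b+1) c = 0"
    and "2*a*E3 (a-1) b c + (a-b+c)*E3 a b c + (c-a-b-1)*E3 a (b+1) c = 0"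
    and "(a-b)*(a+b-c)*E3 a b c + a*(a-b-c-1)*E3 (a-1) b c + b*(a-b+c+1)*E3 a (b-1) c = 0"
    and "(a-b+c+1)*(a+b-c+1)*E3 (a+1) b c + (3*a^2+a-(2*a+1)*(b+c)-(b-c)^2)*E3 a b c
      + 2*a*(a-b-c-1)*E3 (a-1) b c = 0"
proof -
  define K :: real where "K = fact (nat a) * fact (nat b) * fact (nat c)"
  note E = of_int_E3_eq_hsum[of a b c, folded K_def] of_int_E3_neighbours[OF assms, folded K_def]
  note of_int_simps = of_int_add of_int_diff of_int_mult of_int_power of_int_1 of_int_numeral
  note scaled_zero = mult_zero_right of_int_eq_0_iff
  let ?lhs1 = "2*(a-b)*E3 a b c + (a-b+c+1)*E3 (a+1) b c + (a-b-c-1)*E3 a (b+1) c"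
  have "real_of_int ?lhs1 = K * (of_int (2 * (a - b)) * hsum a b c
      + of_int ((a - b + c + 1) * (a + 1)) * hsum (a + 1) b c
      + of_int ((a - b - c - 1) * (b + 1)) * hsum a (b + 1) c)"
    unfolding of_int_simps E by algebra
  then show "?lhs1 = 0"
    using hsum_recurrence1[OF assms(1), of b c] by (simp only: scaled_zero)
  txt \<open>Lower neighbours are grouped as a * E3 (a - 1) b c and b * E3 a (b - 1) c, the form in which
    of_int_E3_neighbours covers also a = 0 and b = 0.\<close>
  have regroup2: "2*a*E3 (a-1) b c + (a-b+c)*E3 a b c + (c-a-b-1)*E3 a (b+1) c =
      2*(a*E3 (a-1) b c) + (a-b+c)*E3 a b c + (c-a-b-1)*E3 a (b+1) c" (is "?lhs2 = _")
    by algebra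
  have "real_of_int ?lhs2 = K * (2 * hsum (a - 1) b c + of_int (a - b + c) * hsum a b c
      + of_int ((c - a - b - 1) * (b + 1)) * hsum a (b + 1) c)"
    unfolding regroup2 of_int_simps E by algebra
  then show "?lhs2 = 0"
    using hsum_recurrence2[OF assms(1), of b c] by (simp only: scaled_zero)
  have regroup3: "(a-b)*(a+b-c)*E3 a b c + a*(a-b-c-1)*E3 (a-1) b c + b*(a-b+c+1)*E3 a (b-1) c =
      (a-b)*(a+b-c)*E3 a b c + (a-b-c-1)*(a*E3 (a-1) b c) + (a-b+c+1)*(b*E3 a (b-1) c)"
    (is "?lhs3 = _")
    by algebra
  have "real_of_int ?lhs3 = K * (of_int ((a - b) * (a + b - c)) * hsum a b c
      + of_int (a - b - c - 1) * hsum (a - 1) b c + of_int (a - b + c + 1) * hsum a (b - 1) c)"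
    unfolding regroup3 of_int_simps E by algebra
  then show "?lhs3 = 0"
    using hsum_recurrence3[OF assms(1), of b c] by (simp only: scaled_zero)
  have regroup4: "(a-b+c+1)*(a+b-c+1)*E3 (a+1) b c + (3*a^2+a-(2*a+1)*(b+c)-(b-c)^2)*E3 a b c
      + 2*a*(a-b-c-1)*E3 (a-1) b c =
      (a-b+c+1)*(a+b-c+1)*E3 (a+1) b c + (3*a^2+a-(2*a+1)*(b+c)-(b-c)^2)*E3 a b c
      + 2*(a-b-c-1)*(a*E3 (a-1) b c)" (is "?lhs4 = _")
    by algebra
  have "real_of_int ?lhs4 =
      K * (of_int ((a - b + c + 1) * (a + b - c + 1) * (a + 1)) * hsum (a + 1) b c
      + of_int (3 * a^2 + a - (2 * a + 1) * (b + c) - (b - c)^2) * hsum a b c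
      + of_int (2 * (a - b - c - 1)) * hsum (a - 1) b c)"
    unfolding regroup4 of_int_simps E by algebra
  then show "?lhs4 = 0"
    using hsum_recurrence4[OF assms(1), of b c] by (simp only: scaled_zero)
qed

theorem mainTheorem7:
  fixes a b c :: int
  assumes "a \<ge> 0" "b \<ge> 0" "c \<ge> 0"
  shows "2*(a-b)*E3 a b c + (a-b+c+1)*E3 (a+1) b c + (a-b-c-1)*E3 a (b+1) c = 0 \<and>
         2*a*E3 (a-1) b c + (a-b+c)*E3 a b c + (c-a-b-1)*E3 a (b+1) c = 0 \<and>
         (a-b)*(a+b-c)*E3 a b c + a*(a-b-c-1)*E3 (a-1) b c + b*(a-b+c+1)*E3 a (b-1) c = 0 \<and>
         (a-b+c+1)*(a+b-c+1)*E3 (a+1) b c + (3*a^2+a-(2*a+1)*(b+c)-(b-c)^2)*E3 a b c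
           + 2*a*(a-b-c-1)*E3 (a-1) b c = 0"
  using E3_recurrences[OF assms] by blast

end
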